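(* Let $k\geq 2$ and let $H$ be a maximal outerplanar graph of order $2k$ whose Hamiltonian cycle bounding the outer face is $a_1a_2\cdots a_{2k}a_1$. Let $G_H$ be the graph obtained from $H$ by adding $k$ new vertices $u_1,\dots,u_k$ and the $2k$ new edges $u_ia_{2i-1}$, $u_ia_{2i}$ for $i=1,\dots,k$. Then $G_H$ is a maximal outerplanar graph of order $n=3k$ with exactly $t=k$ vertices of degree $2$, and $\gamma_{\times 2}(G_H)=\frac{2n}{3}=\frac{n+t}{2}=n-t$. *)

theory Defs
  imports Complex_Main
begin

definition simple_graph :: "'a set \<Rightarrow> 'a set set \<Rightarrow> bool" where
  "simple_graph V E \<longleftrightarrow> finite V \<and> (\<forall>e\<in>E. \<exists>x y. x \<noteq> y \<and> x \<in> V \<and> y \<in> V \<and> e = {x, y})"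

definition nbhd :: "'a set set \<Rightarrow> 'a \<Rightarrow> 'a set" where
  "nbhd E v = {w. {v, w} \<in> E}"

definition degree :: "'a set set \<Rightarrow> 'a \<Rightarrow> nat" where
  "degree E v = card (nbhd E v)"

text \<open>Two chords of a convex polygon, given by the positions of their endpoints,
  cross iff their endpoints strictly interleave.\<close>
definition chords_cross :: "nat set \<Rightarrow> nat set \<Rightarrow> bool" where
  "chords_cross S T \<longleftrightarrow>
     (\<exists>i j k l. S = {i, j} \<and> T = {k, l} \<and> i < k \<and> k < j \<and> j < l)"

text \<open>The vertices placed on a circle (outer face) in the order given by the injective
  position map f, all edges drawn as straight chords, and no two edges cross.\<close>
definition outerplanar_wrt :: "'a set \<Rightarrow> 'a set set \<Rightarrow> ('a \<Rightarrow> nat) \<Rightarrow> bool" where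
  "outerplanar_wrt V E f \<longleftrightarrow> inj_on f V \<and>
     (\<forall>e\<in>E. \<forall>e'\<in>E. \<not> chords_cross (f ` e) (f ` e'))"

definition outerplanar :: "'a set \<Rightarrow> 'a set set \<Rightarrow> bool" where
  "outerplanar V E \<longleftrightarrow> simple_graph V E \<and> (\<exists>f. outerplanar_wrt V E f)"

definition maximal_outerplanar :: "'a set \<Rightarrow> 'a set set \<Rightarrow> bool" where
  "maximal_outerplanar V E \<longleftrightarrow> outerplanar V E \<and>
     (\<forall>x\<in>V. \<forall>y\<in>V. x \<noteq> y \<and> {x, y} \<notin> E \<longrightarrow> \<not> outerplanar V (insert {x, y} E))"

definition double_dominating :: "'a set \<Rightarrow> 'a set set \<Rightarrow> 'a set \<Rightarrow> bool" where
  "double_dominating V E D \<longleftrightarrow> D \<subseteq> V \<and>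
     (\<forall>v\<in>V. card (insert v (nbhd E v) \<inter> D) \<ge> 2)"

definition double_domination_number :: "'a set \<Rightarrow> 'a set set \<Rightarrow> nat" where
  "double_domination_number V E = (LEAST c. \<exists>D. double_dominating V E D \<and> card D = c)"

text \<open>The graph G_H: old vertices Inl x, new vertices u_i = Inr i (i = 1..k),
  u_i adjacent to a_(2i-1) and a_(2i).\<close>
definition GH_vertices :: "nat \<Rightarrow> 'a set \<Rightarrow> ('a + nat) set" where
  "GH_vertices k V = Inl ` V \<union> Inr ` {1..k}"

definition GH_edges :: "nat \<Rightarrow> (nat \<Rightarrow> 'a) \<Rightarrow> 'a set set \<Rightarrow> ('a + nat) set set" where
  "GH_edges k a E = (image Inl) ` E
     \<union> {{Inr i, Inl (a (2*i - 1))} | i. i \<in> {1..k}}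
     \<union> {{Inr i, Inl (a (2*i))} | i. i \<in> {1..k}}"

end

theory Submission
  imports Defs
begin

text \<open>Drawing u_i on the circle between a_(2i-1) and a_(2i) gives an outerplanar drawing of G_H.
  It is maximal: a new chord between old vertices would restrict to a new chord of H, and a new
  chord u_i y is impossible, because the outer cycle of H minus a_(2i-1) is a path avoiding the
  chord u_i a_(2i-1), so y (or its neighbour on that path) lies on the same side of it as a_(2i);
  symmetrically for u_i a_(2i); and a_(2i-1), a_(2i) lie on the same side of u_i y as they are
  adjacent. Three chords at u_i cannot behave like this.
  Every a_j has two cycle neighbours and one u_i, so the vertices of degree 2 are exactly the u_i.
  V(H) double dominates G_H, while the k closed neighbourhoods N[u_i] are pairwise disjoint and
  each must contain two vertices of a double dominating set; hence the double domination
  number is 2k.\<close>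

text \<open>With the vertices on a circle in the order of their positions f, the chord xy splits the
  other vertices into those with position strictly between f x and f y and the rest.\<close>
definition inside_chord :: "('v \<Rightarrow> nat) \<Rightarrow> 'v \<Rightarrow> 'v \<Rightarrow> 'v \<Rightarrow> bool" where
  "inside_chord f x y z \<longleftrightarrow> min (f x) (f y) < f z \<and> f z < max (f x) (f y)"

lemma chords_cross_doubleton_iff:
  "chords_cross {a, b} {c, d} \<longleftrightarrow> min a b < min c d \<and> min c d < max a b \<and> max a b < max c d"
proof
  assume "chords_cross {a, b} {c, d}"
  then show "min a b < min c d \<and> min c d < max a b \<and> max a b < max c d"
    by (auto simp: chords_cross_def doubleton_eq_iff)
next
  assume "min a b < min c d \<and> min c d < max a b \<and> max a b < max c d"
  moreover have "{a, b} = {min a b, max a b}" "{c, d} = {min c d, max c d}"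
    by (auto simp: min_def max_def)
  ultimately show "chords_cross {a, b} {c, d}"
    unfolding chords_cross_def by blast
qed

lemma not_chords_cross_Suc:
  "\<not> chords_cross {c, Suc c} T" "\<not> chords_cross T {c, Suc c}"
  by (auto simp: chords_cross_def doubleton_eq_iff)

lemma chords_cross_strict_mono_iff:
  assumes "strict_mono h"
  shows "chords_cross {h a, h b} {h c, h d} \<longleftrightarrow> chords_cross {a, b} {c, d}"
proof -
  have "mono h" using assms by (rule strict_mono_mono)
  then show ?thesis
    unfolding chords_cross_doubleton_iff
    by (simp add: min_of_mono max_of_mono strict_mono_less[OF assms])
qed

lemma not_chords_cross_between_eq:
  fixes x y z w :: nat
  assumes "z \<notin> {x, y}" "w \<notin> {x, y}"
    and "\<not> chords_cross {x, y} {z, w}" "\<not> chords_cross {z, w} {x, y}"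
  shows "(min x y < z \<and> z < max x y) = (min x y < w \<and> w < max x y)"
  using assms unfolding chords_cross_doubleton_iff min_def max_def by simp presburger

lemma outerplanar_wrt_inside_chord_eq:
  assumes "outerplanar_wrt W F f" "{x, y} \<in> F" "{z, w} \<in> F"
    and "x \<in> W" "y \<in> W" "z \<in> W" "w \<in> W" "z \<notin> {x, y}" "w \<notin> {x, y}"
  shows "inside_chord f x y z = inside_chord f x y w"
  unfolding inside_chord_def
proof (rule not_chords_cross_between_eq)
  have "inj_on f W" using assms(1) by (simp add: outerplanar_wrt_def)
  then show "f z \<notin> {f x, f y}" "f w \<notin> {f x, f y}"
    using assms(4-9) by (auto simp: inj_on_eq_iff)
  have "\<not> chords_cross (f ` {x, y}) (f ` {z, w})" "\<not> chords_cross (f ` {z, w}) (f ` {x, y})"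
    using assms(1-3) unfolding outerplanar_wrt_def by blast+
  then show "\<not> chords_cross {f x, f y} {f z, f w}" "\<not> chords_cross {f z, f w} {f x, f y}"
    by simp_all
qed

text \<open>Of three chords from a common point, the middle one separates the endpoints of the others.\<close>
lemma three_points_separated:
  fixes u p q y :: nat
  assumes "distinct [u, p, q, y]"
    and "(min u p < y \<and> y < max u p) = (min u p < q \<and> q < max u p)"
    and "(min u q < y \<and> y < max u q) = (min u q < p \<and> p < max u q)"
  shows "(min u y < p \<and> p < max u y) \<noteq> (min u y < q \<and> q < max u y)"
  using assms unfolding min_def max_def by simp presburger

lemma inside_chord_three_chords:
  assumes "inj_on f {u, p, q, y}" "distinct [u, p, q, y]"
    and "inside_chord f u p y = inside_chord f u p q" "inside_chord f u q y = inside_chord f u q p"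
  shows "inside_chord f u y p \<noteq> inside_chord f u y q"
proof -
  have "distinct [f u, f p, f q, f y]"
    using assms(1,2) by (simp add: inj_on_def)
  from three_points_separated[OF this] show ?thesis
    using assms(3,4) unfolding inside_chord_def by blast
qed

lemma outerplanar_wrt_comp:
  assumes "outerplanar_wrt W F f" "inj_on h V" "h ` V \<subseteq> W" "\<And>e. e \<in> E \<Longrightarrow> h ` e \<in> F"
  shows "outerplanar_wrt V E (f \<circ> h)"
  using assms unfolding outerplanar_wrt_def
  by (metis comp_inj_on image_comp inj_on_subset)

definition closed_walk :: "'v set set \<Rightarrow> (nat \<Rightarrow> 'v) \<Rightarrow> nat \<Rightarrow> bool" where
  "closed_walk F c n \<longleftrightarrow> (\<forall>i\<in>{1..<n}. {c i, c (Suc i)} \<in> F) \<and> {c n, c 1} \<in> F"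

lemma eq_on_interval_by_steps:
  fixes P :: "nat \<Rightarrow> bool"
  assumes "l \<le> m" "\<And>t. l \<le> t \<Longrightarrow> t < m \<Longrightarrow> P t = P (Suc t)"
  shows "P l = P m"
  using assms by (induction m rule: dec_induct) auto

lemma cyclic_eq_off_point:
  fixes P :: "nat \<Rightarrow> bool"
  assumes step: "\<And>t. t \<in> {1..<n} \<Longrightarrow> t \<noteq> p \<Longrightarrow> Suc t \<noteq> p \<Longrightarrow> P t = P (Suc t)"
    and wrap: "n \<noteq> p \<Longrightarrow> 1 \<noteq> p \<Longrightarrow> P n = P 1"
    and "j \<in> {1..n}" "j' \<in> {1..n}" "j \<noteq> p" "j' \<noteq> p"
  shows "P j = P j'"
proof -
  define r where "r = (if p = n then 1 else n)"
  have to_r: "P j = P r" if "j \<in> {1..n}" "j \<noteq> p" for j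
  proof (cases "p < j")
    case True
    then show ?thesis
      using that step eq_on_interval_by_steps[of j n P] by (auto simp: r_def)
  next
    case False
    then have "P 1 = P j"
      using that step eq_on_interval_by_steps[of 1 j P] by auto
    moreover have "P r = P 1"
      using that False wrap by (auto simp: r_def)
    ultimately show ?thesis by simp
  qed
  show ?thesis
    using to_r assms(3-6) by metis
qed

lemma closed_walk_mono: "closed_walk F c n \<Longrightarrow> F \<subseteq> F' \<Longrightarrow> closed_walk F' c n"
  unfolding closed_walk_def by blast

lemma closed_walk_inside_chord_eq:
  assumes emb: "outerplanar_wrt W F f"
    and walk: "closed_walk F c n" "inj_on c {1..n}" "c ` {1..n} \<subseteq> W"
    and chord: "{x, c p} \<in> F" "x \<in> W" "x \<notin> c ` {1..n}" "p \<in> {1..n}"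
    and "j \<in> {1..n}" "j' \<in> {1..n}" "j \<noteq> p" "j' \<noteq> p"
  shows "inside_chord f x (c p) (c j) = inside_chord f x (c p) (c j')"
proof -
  have off: "c t \<in> W" "c t \<notin> {x, c p}" if "t \<in> {1..n}" "t \<noteq> p" for t
    using that walk(2,3) chord(3,4) by (auto simp: inj_on_eq_iff)
  have side_eq: "inside_chord f x (c p) (c t) = inside_chord f x (c p) (c t')"
    if "{c t, c t'} \<in> F" "t \<in> {1..n}" "t' \<in> {1..n}" "t \<noteq> p" "t' \<noteq> p" for t t'
    using outerplanar_wrt_inside_chord_eq[OF emb chord(1) that(1) chord(2)] off that
      chord(4) walk(3) by blast
  show ?thesis
  proof (rule cyclic_eq_off_point[of n p])
    fix t assume "t \<in> {1..<n}" "t \<noteq> p" "Suc t \<noteq> p"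
    then show "inside_chord f x (c p) (c t) = inside_chord f x (c p) (c (Suc t))"
      using walk(1) by (intro side_eq) (auto simp: closed_walk_def)
  next
    assume "n \<noteq> p" "1 \<noteq> p"
    then show "inside_chord f x (c p) (c n) = inside_chord f x (c p) (c 1)"
      using walk(1) chord(4) by (intro side_eq) (auto simp: closed_walk_def)
  qed (use assms in auto)
qed

lemma closed_walk_neighbours:
  assumes "closed_walk F c n" "3 \<le> n" "j \<in> {1..n}"
  obtains j' j'' where "j' \<in> {1..n}" "j'' \<in> {1..n}" "distinct [j, j', j'']"
    "{c j, c j'} \<in> F" "{c j, c j''} \<in> F"
proof
  show "{c j, c (if j < n then Suc j else 1)} \<in> F"
    using assms by (auto simp: closed_walk_def)
  have "{c (j - 1), c (Suc (j - 1))} \<in> F" if "1 < j"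
  proof -
    have "j - 1 \<in> {1..<n}" using assms(3) that by auto
    then show ?thesis using assms(1) by (simp add: closed_walk_def)
  qed
  then show "{c j, c (if 1 < j then j - 1 else n)} \<in> F"
    using assms by (auto simp: closed_walk_def insert_commute)
qed (use assms in auto)

lemma double_dominating_card_ge:
  assumes dd: "double_dominating V E D" and "finite V" "S \<subseteq> V"
    and disj: "pairwise (\<lambda>v w. disjnt (insert v (nbhd E v)) (insert w (nbhd E w))) S"
  shows "2 * card S \<le> card D"
proof -
  have "D \<subseteq> V" using dd by (simp add: double_dominating_def)
  then have fin: "finite D" "finite S"
    using assms(2,3) finite_subset by blast+
  have "2 * card S = (\<Sum>v\<in>S. 2)" by simp
  also have "\<dots> \<le> (\<Sum>v\<in>S. card (insert v (nbhd E v) \<inter> D))"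
    using dd assms(3) by (intro sum_mono) (auto simp: double_dominating_def)
  also have "\<dots> = card (\<Union>v\<in>S. insert v (nbhd E v) \<inter> D)"
    using fin disj by (intro card_UN_disjoint[symmetric]) (auto simp: pairwise_def disjnt_def)
  also have "\<dots> \<le> card D"
    using fin by (intro card_mono) auto
  finally show ?thesis .
qed

lemma double_domination_number_eqI:
  assumes "double_dominating V E D" "\<And>D'. double_dominating V E D' \<Longrightarrow> card D \<le> card D'"
  shows "double_domination_number V E = card D"
  unfolding double_domination_number_def by (rule Least_equality) (use assms in auto)

locale GH_construction =
  fixes k :: nat and V :: "'a set" and E :: "'a set set" and a :: "nat \<Rightarrow> 'a"
  assumes k_ge_2: "k \<ge> 2" and maximal_H: "maximal_outerplanar V E"
    and inj_a: "inj_on a {1..2*k}" and image_a: "a ` {1..2*k} = V"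
    and cycle_edges: "\<forall>i\<in>{1..<2*k}. {a i, a (Suc i)} \<in> E" and cycle_closed: "{a (2*k), a 1} \<in> E"
    and embedding_H: "outerplanar_wrt V E (inv_into {1..2*k} a)"
begin

abbreviation "GV \<equiv> GH_vertices k V"
abbreviation "GE \<equiv> GH_edges k a E"

lemma simple_graph_H: "simple_graph V E"
  using maximal_H by (simp add: maximal_outerplanar_def outerplanar_def)

lemma finite_V: "finite V"
  using simple_graph_H by (simp add: simple_graph_def)

lemma card_V: "card V = 2 * k"
  using card_image[OF inj_a] image_a by simp

lemma card_GV: "card GV = 3 * k"
proof -
  have "card GV = card (Inl ` V :: ('a + nat) set) + card (Inr ` {1..k} :: ('a + nat) set)"
    unfolding GH_vertices_def using finite_V by (intro card_Un_disjoint) auto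
  then show ?thesis
    using card_V by (simp add: card_image)
qed

lemma GV_cases:
  assumes "v \<in> GV"
  obtains (old) j where "j \<in> {1..2*k}" "v = Inl (a j)" | (new) i where "i \<in> {1..k}" "v = Inr i"
  using assms image_a unfolding GH_vertices_def by blast

lemma pair_index_range:
  "i \<in> {1..k} \<Longrightarrow> 2*i - 1 \<in> {1..2*k}" "i \<in> {1..k} \<Longrightarrow> 2*i \<in> {1..2*k}"
  by auto

lemma inv_into_a: "j \<in> {1..2*k} \<Longrightarrow> inv_into {1..2*k} a (a j) = j"
  using inv_into_f_f[OF inj_a] by blast

lemma Inl_in_GV: "x \<in> V \<Longrightarrow> Inl x \<in> GV"
  unfolding GH_vertices_def by blast

lemma a_in_V: "j \<in> {1..2*k} \<Longrightarrow> a j \<in> V"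
  using image_a by blast

lemma Inl_a_in_GV: "j \<in> {1..2*k} \<Longrightarrow> Inl (a j) \<in> GV"
  using a_in_V by (simp add: Inl_in_GV)

lemma Inr_in_GV: "i \<in> {1..k} \<Longrightarrow> Inr i \<in> GV"
  unfolding GH_vertices_def by blast

lemma Inl_image_in_GE: "e \<in> E \<Longrightarrow> Inl ` e \<in> GE"
  by (simp add: GH_edges_def)

lemma new_edges_in_GE:
  "i \<in> {1..k} \<Longrightarrow> {Inr i, Inl (a (2*i - 1))} \<in> GE"
  "i \<in> {1..k} \<Longrightarrow> {Inr i, Inl (a (2*i))} \<in> GE"
  by (auto simp: GH_edges_def)

lemma GE_cases:
  assumes "e \<in> GE"
  obtains (old) x y where "{x, y} \<in> E" "x \<in> V" "y \<in> V" "x \<noteq> y" "e = {Inl x, Inl y}"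
    | (new) i where "i \<in> {1..k}" "e = {Inr i, Inl (a (2*i - 1))} \<or> e = {Inr i, Inl (a (2*i))}"
  using assms simple_graph_H unfolding GH_edges_def simple_graph_def by fastforce

lemma closed_walk_GE: "closed_walk GE (Inl \<circ> a) (2*k)"
  using cycle_edges cycle_closed Inl_image_in_GE by (fastforce simp: closed_walk_def)

lemma nbhd_Inr:
  assumes "i \<in> {1..k}"
  shows "nbhd GE (Inr i) = {Inl (a (2*i - 1)), Inl (a (2*i))}"
  using new_edges_in_GE[OF assms] unfolding nbhd_def GH_edges_def
  by (auto simp: doubleton_eq_iff)

subsection \<open>Outerplanarity\<close>

text \<open>u_i is placed strictly between a_(2i-1) and a_(2i), which sit at positions 4i-2 and 4i.\<close>
definition GH_position :: "'a + nat \<Rightarrow> nat" where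
  "GH_position = case_sum (\<lambda>v. 2 * inv_into {1..2*k} a v) (\<lambda>i. 4 * i - 1)"

lemma GH_position_edge:
  assumes "e \<in> GE"
  obtains (old) x y where "{x, y} \<in> E"
      "GH_position ` e = {2 * inv_into {1..2*k} a x, 2 * inv_into {1..2*k} a y}"
    | (consecutive) c where "GH_position ` e = {c, Suc c}"
  using assms
proof (cases rule: GE_cases)
  case (new i)
  then have "inv_into {1..2*k} a (a (2*i - 1)) = 2*i - 1" "inv_into {1..2*k} a (a (2*i)) = 2*i"
    using inv_into_a pair_index_range by blast+
  then have "GH_position ` e = {4*i - 2, Suc (4*i - 2)} \<or> GH_position ` e = {4*i - 1, Suc (4*i - 1)}"
    using new by (auto simp: GH_position_def)
  then show ?thesis using consecutive by blast
qed (auto simp: GH_position_def intro: old)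

lemma inj_GH_position: "inj_on GH_position GV"
proof -
  have "inj_on (inv_into {1..2*k} a) V"
    using inj_on_inv_into[of V a "{1..2*k}"] image_a by simp
  then have "inj_on (GH_position \<circ> Inl) V"
    by (simp add: GH_position_def inj_on_def)
  moreover have "inj_on (GH_position \<circ> Inr) {1..k}"
    by (auto simp: GH_position_def inj_on_def)
  moreover have "2 * m \<noteq> 4 * i - 1" if "i \<ge> 1" for m i :: nat
    using that by presburger
  then have "GH_position ` Inl ` V \<inter> GH_position ` Inr ` {1..k} = {}"
    by (auto simp: GH_position_def)
  ultimately show ?thesis
    unfolding GH_vertices_def inj_on_Un by (auto intro: inj_on_imageI)
qed

lemma outerplanar_GH: "outerplanar GV GE"
proof -
  have "simple_graph GV GE"
    unfolding simple_graph_def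
  proof
    show "finite GV"
      using finite_V by (simp add: GH_vertices_def)
    show "\<forall>e\<in>GE. \<exists>x y. x \<noteq> y \<and> x \<in> GV \<and> y \<in> GV \<and> e = {x, y}"
    proof
      fix e assume "e \<in> GE"
      then show "\<exists>x y. x \<noteq> y \<and> x \<in> GV \<and> y \<in> GV \<and> e = {x, y}"
      proof (cases rule: GE_cases)
        case (old x y)
        then show ?thesis using Inl_in_GV by blast
      next
        case (new i)
        then have "Inl (a (2*i - 1)) \<in> GV" "Inl (a (2*i)) \<in> GV" "Inr i \<in> GV"
          using Inl_a_in_GV Inr_in_GV pair_index_range by blast+
        then show ?thesis using new(2) by blast
      qed
    qed
  qed
  moreover have "\<not> chords_cross (GH_position ` e) (GH_position ` e')" if "e \<in> GE" "e' \<in> GE" for e e'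
    using that(1)
  proof (cases rule: GH_position_edge)
    case (old x y)
    from that(2) show ?thesis
    proof (cases rule: GH_position_edge)
      case (old z w)
      let ?g = "inv_into {1..2*k} a"
      have "\<not> chords_cross (?g ` {x, y}) (?g ` {z, w})"
        using embedding_H \<open>{x, y} \<in> E\<close> \<open>{z, w} \<in> E\<close> unfolding outerplanar_wrt_def by blast
      moreover have "strict_mono (\<lambda>n::nat. 2 * n)"
        by (simp add: strict_mono_def)
      ultimately show ?thesis
        using \<open>GH_position ` e = _\<close> \<open>GH_position ` e' = _\<close> chords_cross_strict_mono_iff by simp
    qed (simp add: not_chords_cross_Suc)
  qed (simp add: not_chords_cross_Suc)
  ultimately show ?thesis
    unfolding outerplanar_def outerplanar_wrt_def using inj_GH_position by blast
qed

subsection \<open>Maximality\<close>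

lemma no_extra_edge_between_old:
  assumes "x \<in> V" "y \<in> V" "x \<noteq> y" "{Inl x, Inl y} \<notin> GE"
  shows "\<not> outerplanar GV (insert {Inl x, Inl y} GE)"
proof
  assume "outerplanar GV (insert {Inl x, Inl y} GE)"
  then obtain f where f: "outerplanar_wrt GV (insert {Inl x, Inl y} GE) f"
    unfolding outerplanar_def by blast
  have "outerplanar_wrt V (insert {x, y} E) (f \<circ> Inl)"
    using Inl_in_GV Inl_image_in_GE
    by (intro outerplanar_wrt_comp[OF f]) (auto simp: inj_on_def)
  moreover have "simple_graph V (insert {x, y} E)"
    using simple_graph_H assms(1-3) unfolding simple_graph_def by blast
  moreover have "{x, y} \<notin> E"
    using assms(4) Inl_image_in_GE by fastforce
  ultimately show False
    using maximal_H assms(1-3) unfolding maximal_outerplanar_def outerplanar_def by blast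
qed

text \<open>The outer cycle of H, minus the endpoint a_p, is a path avoiding the chord from u_i to a_p;
  so it lies on one side of that chord, and so does every other u_i', through its edge to that path.\<close>
lemma new_vertex_chord_side:
  assumes emb: "outerplanar_wrt GV F f" and "GE \<subseteq> F"
    and chord: "i \<in> {1..k}" "p \<in> {1..2*k}" "{Inr i, Inl (a p)} \<in> F"
    and w: "w \<in> GV" "w \<notin> {Inr i, Inl (a p)}"
    and j: "j \<in> {1..2*k}" "j \<noteq> p"
  shows "inside_chord f (Inr i) (Inl (a p)) w = inside_chord f (Inr i) (Inl (a p)) (Inl (a j))"
proof -
  have walk: "closed_walk F (Inl \<circ> a) (2*k)"
    using closed_walk_GE \<open>GE \<subseteq> F\<close> by (rule closed_walk_mono)
  have walk_inj: "inj_on (Inl \<circ> a) {1..2*k}"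
    using inj_a inj_Inl by (rule comp_inj_on)
  have walk_in_GV: "(Inl \<circ> a) ` {1..2*k} \<subseteq> GV"
    using Inl_a_in_GV by (simp add: image_subset_iff)
  have cycle_side: "inside_chord f (Inr i) (Inl (a p)) (Inl (a m))
      = inside_chord f (Inr i) (Inl (a p)) (Inl (a j))" if "m \<in> {1..2*k}" "m \<noteq> p" for m
  proof -
    have "inside_chord f (Inr i) ((Inl \<circ> a) p) ((Inl \<circ> a) m)
        = inside_chord f (Inr i) ((Inl \<circ> a) p) ((Inl \<circ> a) j)"
      by (rule closed_walk_inside_chord_eq[OF emb walk walk_inj walk_in_GV]) (use chord j that Inr_in_GV in auto)
    then show ?thesis by simp
  qed
  from w(1) show ?thesis
  proof (cases rule: GV_cases)
    case (old m)
    with w(2) have "m \<noteq> p" by auto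
    with old cycle_side show ?thesis by simp
  next
    case (new i')
    define m where "m = (if p = 2*i' then 2*i' - 1 else 2*i')"
    have m: "m \<in> {1..2*k}" "m \<noteq> p" "{w, Inl (a m)} \<in> F"
      using new pair_index_range new_edges_in_GE \<open>GE \<subseteq> F\<close> by (auto simp: m_def)
    have "inside_chord f (Inr i) (Inl (a p)) w = inside_chord f (Inr i) (Inl (a p)) (Inl (a m))"
      by (rule outerplanar_wrt_inside_chord_eq[OF emb chord(3) m(3)])
        (use w m(1) chord(1,2) inj_on_eq_iff[OF inj_a m(1) chord(2)] m(2)
          in \<open>auto intro: Inl_a_in_GV Inr_in_GV\<close>)
    with cycle_side m show ?thesis by simp
  qed
qed

lemma no_extra_edge_at_new:
  assumes i: "i \<in> {1..k}" and y: "y \<in> GV" "y \<noteq> Inr i" "{Inr i, y} \<notin> GE"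
  shows "\<not> outerplanar GV (insert {Inr i, y} GE)"
proof
  let ?F = "insert {Inr i, y} GE"
  let ?u = "Inr i" and ?p = "Inl (a (2*i - 1))" and ?q = "Inl (a (2*i))"
  assume "outerplanar GV ?F"
  then obtain f where emb: "outerplanar_wrt GV ?F f"
    unfolding outerplanar_def by blast
  have sub: "GE \<subseteq> ?F" by blast
  have range: "2*i - 1 \<in> {1..2*k}" "2*i \<in> {1..2*k}" "2*i - 1 \<noteq> 2*i"
    using i by auto
  have in_GV: "?u \<in> GV" "?p \<in> GV" "?q \<in> GV"
    using i range Inr_in_GV Inl_a_in_GV by auto
  have edges: "{?u, ?p} \<in> ?F" "{?u, ?q} \<in> ?F"
    using new_edges_in_GE[OF i] by auto
  have "2*i - 1 \<in> {1..<2*k}" "Suc (2*i - 1) = 2*i"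
    using i by auto
  then have "{?p, ?q} \<in> ?F"
    using closed_walk_GE unfolding closed_walk_def by (metis comp_apply insertCI)
  have distinct: "distinct [?u, ?p, ?q, y]"
    using y new_edges_in_GE[OF i] range inj_a by (auto simp: inj_on_eq_iff)
  have inj: "inj_on f {?u, ?p, ?q, y}"
  proof (rule inj_on_subset)
    show "inj_on f GV" using emb by (simp add: outerplanar_wrt_def)
    show "{?u, ?p, ?q, y} \<subseteq> GV" using in_GV y(1) by simp
  qed
  have side_p: "inside_chord f ?u ?p y = inside_chord f ?u ?p ?q"
    by (rule new_vertex_chord_side[OF emb sub i range(1) edges(1) y(1)])
      (use range distinct in auto)
  have side_q: "inside_chord f ?u ?q y = inside_chord f ?u ?q ?p"
    by (rule new_vertex_chord_side[OF emb sub i range(2) edges(2) y(1)])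
      (use range distinct in auto)
  have side_y: "inside_chord f ?u y ?p = inside_chord f ?u y ?q"
    by (rule outerplanar_wrt_inside_chord_eq[OF emb insertI1 \<open>{?p, ?q} \<in> ?F\<close>])
      (use in_GV y(1) distinct in auto)
  from inside_chord_three_chords[OF inj distinct side_p side_q] side_y show False
    by contradiction
qed

lemma maximal_outerplanar_GH: "maximal_outerplanar GV GE"
  unfolding maximal_outerplanar_def
proof (intro conjI outerplanar_GH ballI impI)
  fix x y assume x: "x \<in> GV" and y: "y \<in> GV" and xy: "x \<noteq> y \<and> {x, y} \<notin> GE"
  from x show "\<not> outerplanar GV (insert {x, y} GE)"
  proof (cases rule: GV_cases)
    case (new i)
    show ?thesis
      using xy unfolding new(2) by (intro no_extra_edge_at_new[OF new(1) y]) auto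
  next
    case (old j)
    note x_old = old
    from y show ?thesis
    proof (cases rule: GV_cases)
      case (old j')
      show ?thesis
        using no_extra_edge_between_old[OF a_in_V[OF x_old(1)] a_in_V[OF old(1)]] xy
        unfolding x_old(2) old(2) by simp
    next
      case (new i)
      show ?thesis
        using no_extra_edge_at_new[OF new(1) x] xy x_old(2) new(2) by (simp add: insert_commute)
    qed
  qed
qed

subsection \<open>Degrees\<close>

lemma cycle_neighbours_GE:
  assumes "j \<in> {1..2*k}"
  obtains j' j'' where "j' \<in> {1..2*k}" "j'' \<in> {1..2*k}" "distinct [j, j', j'']"
    "Inl (a j') \<in> nbhd GE (Inl (a j))" "Inl (a j'') \<in> nbhd GE (Inl (a j))"
proof -
  have "3 \<le> 2 * k" using k_ge_2 by simp
  then obtain j' j'' where "j' \<in> {1..2*k}" "j'' \<in> {1..2*k}" "distinct [j, j', j'']"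
    "{(Inl \<circ> a) j, (Inl \<circ> a) j'} \<in> GE" "{(Inl \<circ> a) j, (Inl \<circ> a) j''} \<in> GE"
    by (rule closed_walk_neighbours[OF closed_walk_GE _ assms])
  with that show ?thesis
    by (simp add: nbhd_def)
qed

lemma degree_Inl_ne_2:
  assumes "j \<in> {1..2*k}"
  shows "degree GE (Inl (a j)) \<noteq> 2"
proof -
  obtain j' j'' where nb: "j' \<in> {1..2*k}" "j'' \<in> {1..2*k}" "distinct [j, j', j'']"
    "Inl (a j') \<in> nbhd GE (Inl (a j))" "Inl (a j'') \<in> nbhd GE (Inl (a j))"
    using cycle_neighbours_GE[OF assms] .
  define i where "i = (j + 1) div 2"
  have i: "i \<in> {1..k}" "j = 2*i - 1 \<or> j = 2*i"
    using assms unfolding i_def by auto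
  then have "Inr i \<in> nbhd GE (Inl (a j))"
    using new_edges_in_GE[OF i(1)] by (auto simp: nbhd_def insert_commute)
  moreover have "a j' \<noteq> a j''"
    using nb(1-3) inj_a by (auto simp: inj_on_eq_iff)
  ultimately have sub: "{Inr i, Inl (a j'), Inl (a j'')} \<subseteq> nbhd GE (Inl (a j))"
    and three: "card {Inr i, Inl (a j'), Inl (a j'')} = 3"
    using nb(4,5) by auto
  show ?thesis
  proof (cases "finite (nbhd GE (Inl (a j)))")
    case True
    with card_mono[OF True sub] three show ?thesis
      by (simp add: degree_def)
  qed (simp add: degree_def)
qed

lemma degree_two_vertices: "{v \<in> GV. degree GE v = 2} = Inr ` {1..k}"
proof (intro equalityI subsetI)
  fix v assume "v \<in> {v \<in> GV. degree GE v = 2}"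
  then show "v \<in> Inr ` {1..k}"
    using degree_Inl_ne_2 by (auto elim: GV_cases)
next
  fix v :: "'a + nat" assume "v \<in> Inr ` {1..k}"
  then obtain i where i: "i \<in> {1..k}" "v = Inr i" by blast
  then have "a (2*i - 1) \<noteq> a (2*i)"
    using inj_a pair_index_range by (auto simp: inj_on_eq_iff)
  then have "degree GE v = 2"
    using nbhd_Inr[OF i(1)] i(2) by (simp add: degree_def)
  then show "v \<in> {v \<in> GV. degree GE v = 2}"
    using i Inr_in_GV by simp
qed

lemma card_degree_two_vertices: "card {v \<in> GV. degree GE v = 2} = k"
  unfolding degree_two_vertices by (simp add: card_image)

subsection \<open>Double domination\<close>

lemma two_le_card_closed_nbhd_Inl_V:
  assumes "v \<in> GV"
  shows "2 \<le> card (insert v (nbhd GE v) \<inter> Inl ` V)"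
proof -
  let ?N = "insert v (nbhd GE v) \<inter> Inl ` V"
  have "finite ?N" using finite_V by simp
  have two: "2 \<le> card ?N" if "x \<in> ?N" "y \<in> ?N" "x \<noteq> y" for x y
  proof -
    have "{x, y} \<subseteq> ?N" using that by simp
    from card_mono[OF \<open>finite ?N\<close> this] show ?thesis
      using that(3) by simp
  qed
  from assms show ?thesis
  proof (cases rule: GV_cases)
    case (old j)
    obtain j' j'' where j': "j' \<in> {1..2*k}" "distinct [j, j', j'']" "Inl (a j') \<in> nbhd GE v"
      using cycle_neighbours_GE[OF old(1)] old(2) by metis
    have "a j \<noteq> a j'"
      using inj_on_eq_iff[OF inj_a old(1) j'(1)] j'(2) by simp
    then show ?thesis
      using two[of v "Inl (a j')"] old j' a_in_V by simp
  next
    case (new i)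
    have "a (2*i - 1) \<noteq> a (2*i)"
      using inj_on_eq_iff[OF inj_a pair_index_range[OF new(1)]] new(1) by auto
    then show ?thesis
      using two[of "Inl (a (2*i - 1))" "Inl (a (2*i))"] nbhd_Inr[OF new(1)] new(2)
        a_in_V[OF pair_index_range(1)[OF new(1)]] a_in_V[OF pair_index_range(2)[OF new(1)]]
      by simp
  qed
qed

lemma closed_nbhds_Inr_disjoint:
  "pairwise (\<lambda>v w. disjnt (insert v (nbhd GE v)) (insert w (nbhd GE w))) (Inr ` {1..k})"
proof (rule pairwiseI)
  fix v w :: "'a + nat" assume "v \<in> Inr ` {1..k}" "w \<in> Inr ` {1..k}" "v \<noteq> w"
  then obtain i i' where i: "i \<in> {1..k}" "i' \<in> {1..k}" "i \<noteq> i'" "v = Inr i" "w = Inr i'"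
    by blast
  have "a m \<noteq> a m'" if "m \<in> {2*i - 1, 2*i}" "m' \<in> {2*i' - 1, 2*i'}" for m m'
  proof -
    have "m \<in> {1..2*k}" "m' \<in> {1..2*k}" "m \<noteq> m'"
      using that i(1-3) by auto
    then show ?thesis
      using inj_on_eq_iff[OF inj_a] by blast
  qed
  then show "disjnt (insert v (nbhd GE v)) (insert w (nbhd GE w))"
    unfolding i(4,5) nbhd_Inr[OF i(1)] nbhd_Inr[OF i(2)] disjnt_def by auto
qed

lemma double_domination_number_GH: "double_domination_number GV GE = 2 * k"
proof -
  have "double_dominating GV GE (Inl ` V)"
    unfolding double_dominating_def using Inl_in_GV two_le_card_closed_nbhd_Inl_V by blast
  moreover have "card (Inl ` V :: ('a + nat) set) = 2 * k"
    using card_V by (simp add: card_image)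
  moreover have "2 * k \<le> card D" if "double_dominating GV GE D" for D
  proof -
    have "Inr ` {1..k} \<subseteq> GV" using Inr_in_GV by blast
    from double_dominating_card_ge[OF that _ this closed_nbhds_Inr_disjoint]
    show ?thesis
      using finite_V by (simp add: GH_vertices_def card_image)
  qed
  ultimately show ?thesis
    using double_domination_number_eqI by metis
qed

end

theorem mainTheorem3:
  fixes k :: nat and V :: "'a set" and E :: "'a set set" and a :: "nat \<Rightarrow> 'a"
  assumes "k \<ge> 2"
    and "maximal_outerplanar V E"
    and "inj_on a {1..2*k}" and "a ` {1..2*k} = V"
    and "\<forall>i\<in>{1..<2*k}. {a i, a (Suc i)} \<in> E" and "{a (2*k), a 1} \<in> E"
    and "outerplanar_wrt V E (inv_into {1..2*k} a)"
  shows "maximal_outerplanar (GH_vertices k V) (GH_edges k a E)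
    \<and> card (GH_vertices k V) = 3 * k
    \<and> card {v \<in> GH_vertices k V. degree (GH_edges k a E) v = 2} = k
    \<and> (let n = card (GH_vertices k V);
           t = card {v \<in> GH_vertices k V. degree (GH_edges k a E) v = 2};
           g = double_domination_number (GH_vertices k V) (GH_edges k a E)
       in real g = 2 * real n / 3 \<and> real g = (real n + real t) / 2 \<and> real g = real n - real t)"
proof -
  interpret GH_construction k V E a
    using assms by unfold_locales
  show ?thesis
    using maximal_outerplanar_GH card_GV card_degree_two_vertices double_domination_number_GH
    by (simp add: Let_def)
qed

end
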